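(* Let $n\ge2$, $s\ge n$ integers, $\Omega>0$, and $y_1,\dots,y_n\in\big[-\frac{(n-1)\pi}{2\Omega},\frac{(n-1)\pi}{2\Omega}\big]$ pairwise distinct; let $a_1,\dots,a_n\in\mathbb C$ with $\min_j|a_j|=m_{\min}>0$. Let $A=\mathrm{diag}(e^{-iy_1\Omega}a_1,\dots,e^{-iy_n\Omega}a_n)$ and $D=(\phi_s(e^{iy_1\Omega/s}),\dots,\phi_s(e^{iy_n\Omega/s}))\in\mathbb C^{(s+1)\times n}$. Let $\sigma_1\ge\dots\ge\sigma_n$ be the $n$ largest singular values of $DAD^T$ (the remaining ones being $0$). Then $$\sigma_n\ge\frac{m_{\min}\,\zeta(n)^2\,\theta_{\min}(\Omega,s)^{2n-2}}{n\,\pi^{2n-2}},\qquad\theta_{\min}(\Omega,s)=\frac{\Omega}{s}\min_{p\ne j}|y_p-y_j|.$$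
   Context: $\phi_s(z)=(1,z,\dots,z^s)^T$; $D^T$ is the (non-conjugate) transpose. For an integer $k\ge1$: $\zeta(k)=\big((\tfrac{k-1}{2})!\big)^2$ if $k$ is odd, $\zeta(k)=(\tfrac{k}{2})!(\tfrac{k-2}{2})!$ if $k$ is even. *)

theory Defs
  imports "Jordan_Normal_Form.Schur_Decomposition" "HOL-Library.Multiset"
begin

definition zeta :: "nat \<Rightarrow> real" where
  "zeta k = (if odd k then (fact ((k - 1) div 2))^2
             else fact (k div 2) * fact ((k - 2) div 2))"

definition singular_values :: "complex mat \<Rightarrow> real list" where
  "singular_values M = rev (sorted_list_of_multiset
     (image_mset (\<lambda>z. sqrt (Re z)) (proots (char_poly (mat_adjoint M * M)))))"

(* k-th largest singular value, 1-based *)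
definition sigma :: "nat \<Rightarrow> complex mat \<Rightarrow> real" where
  "sigma k M = singular_values M ! (k - 1)"

(* phi_s(z) = (1, z, ..., z^s)^T as columns: D = (phi_s(e^{i y_1 Omega/s}),...,phi_s(e^{i y_n Omega/s})) *)
definition Dmat :: "nat \<Rightarrow> nat \<Rightarrow> real \<Rightarrow> (nat \<Rightarrow> real) \<Rightarrow> complex mat" where
  "Dmat s n \<Omega> y = mat (s + 1) n (\<lambda>(k, j). (exp (\<i> * of_real (y j * \<Omega> / real s))) ^ k)"

definition Amat :: "nat \<Rightarrow> real \<Rightarrow> (nat \<Rightarrow> real) \<Rightarrow> (nat \<Rightarrow> complex) \<Rightarrow> complex mat" where
  "Amat n \<Omega> y a = mat n n (\<lambda>(i, j). if i = j then exp (- \<i> * of_real (y i * \<Omega>)) * a i else 0)"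

end

theory Submission
  imports Defs "HOL-Analysis.Convex"
begin

text \<open>With \<open>M = D A D\<^sup>T\<close> and \<open>X = conj D\<close>, the matrix \<open>M\<^sup>H M\<close> factors as \<open>X Y\<close> with
  \<open>Y X\<close> of size \<open>n \<times> n\<close>, so by Sylvester's determinant identity its characteristic polynomial
  is a power of the variable times that of \<open>Y X\<close>. An eigenvalue of \<open>Y X\<close> is an eigenvalue of
  \<open>M\<^sup>H M\<close> with an eigenvector \<open>w = X v\<close> in the range of \<open>conj D\<close>, and there
  \<open>\<parallel>M w\<parallel> \<ge> m \<sigma> \<parallel>w\<parallel>\<close>, where \<open>m = min |a j|\<close> and \<open>\<sigma> \<parallel>x\<parallel>\<^sup>2 \<le> \<parallel>D x\<parallel>\<^sup>2\<close> for all \<open>x\<close>: this bound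
  is used once for \<open>D\<close> and once, through AM-GM, for \<open>D\<^sup>H\<close>. Hence \<open>n\<close> singular values of \<open>M\<close>
  are at least \<open>m \<sigma>\<close>.

  The bound for the Vandermonde matrix \<open>D\<close> comes from Lagrange interpolation:
  \<open>x j * (\<Prod>k\<noteq>j. z j - z k)\<close> is a combination of the entries of \<open>D x\<close> with the coefficients
  of \<open>\<Prod>k\<noteq>j. X - z k\<close>, whose absolute values sum to at most \<open>2^(n-1)\<close>. Moreover
  \<open>|e^(i\<alpha>) - e^(i\<beta>)| \<ge> 2 |\<alpha> - \<beta>| / \<pi>\<close>, and for \<open>\<theta>\<close>-separated angles the \<open>i\<close>-th nearest node on
  either side of a node is at angular distance at least \<open>i \<theta>\<close>, which gives the factor
  \<open>a! b! \<ge> \<zeta>(n)\<close> with \<open>a + b = n - 1\<close>.\<close>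

lemma two_div_pi_mult_le_sin:
  assumes "0 \<le> t" "t \<le> pi / 2"
  shows "2 / pi * t \<le> sin t"
proof -
  have "concave_on {0..pi/2} sin"
    by (rule f''_le0_imp_concave[where f'=cos and f''="\<lambda>x. - sin x"])
       (auto intro!: derivative_eq_intros sin_ge_zero)
  moreover have "0 \<le> 2 / pi * t" "2 / pi * t \<le> 1"
    using assms by (auto simp: field_simps)
  ultimately have "(1 - 2 / pi * t) * sin 0 + 2 / pi * t * sin (pi / 2)
      \<le> sin ((1 - 2 / pi * t) *\<^sub>R 0 + (2 / pi * t) *\<^sub>R (pi / 2))"
    by (intro concave_onD) auto
  then show ?thesis
    by simp
qed

lemma norm_exp_i_diff:
  "cmod (exp (\<i> * of_real \<alpha>) - exp (\<i> * of_real \<beta>)) = 2 * \<bar>sin ((\<alpha> - \<beta>) / 2)\<bar>"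
proof -
  define t where "t = \<alpha> - \<beta>"
  have "exp (\<i> * of_real \<alpha>) - exp (\<i> * of_real \<beta>) = cis \<beta> * (cis t - 1)"
    by (simp add: cis_conv_exp t_def algebra_simps exp_add[symmetric] flip: exp_of_real)
  then have "cmod (exp (\<i> * of_real \<alpha>) - exp (\<i> * of_real \<beta>)) = cmod (cis t - 1)"
    by (simp add: norm_mult)
  also have "\<dots> = sqrt ((cos t - 1)^2 + (sin t)^2)"
    by (simp add: cmod_def)
  also have "(cos t - 1)^2 + (sin t)^2 = 4 * (sin (t/2))^2"
    using cos_double_sin[of "t/2"] sin_squared_eq[of t] by (simp add: power2_eq_square algebra_simps)
  finally show ?thesis
    by (simp add: t_def real_sqrt_mult)
qed

lemma norm_exp_i_diff_ge:
  assumes "\<bar>\<alpha> - \<beta>\<bar> \<le> pi"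
  shows "2 / pi * \<bar>\<alpha> - \<beta>\<bar> \<le> cmod (exp (\<i> * of_real \<alpha>) - exp (\<i> * of_real \<beta>))"
proof -
  have "\<bar>sin (t / 2)\<bar> = sin (\<bar>t\<bar> / 2)" if "\<bar>t\<bar> \<le> pi" for t
    using that sin_ge_zero[of "\<bar>t\<bar> / 2"] by (cases "t \<ge> 0") auto
  then have "\<bar>sin ((\<alpha> - \<beta>) / 2)\<bar> = sin (\<bar>\<alpha> - \<beta>\<bar> / 2)"
    using assms by blast
  moreover have "2 / pi * (\<bar>\<alpha> - \<beta>\<bar> / 2) \<le> sin (\<bar>\<alpha> - \<beta>\<bar> / 2)"
    using assms by (intro two_div_pi_mult_le_sin) auto
  ultimately show ?thesis
    by (simp add: norm_exp_i_diff)
qed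

lemma fact_mid_mult_le_fact_mult:
  fixes a b :: nat
  assumes "a \<le> b"
  shows "fact ((a + b) div 2) * fact ((a + b + 1) div 2) \<le> (fact a * fact b :: nat)"
  using assms
proof (induction "b - a" arbitrary: a b rule: less_induct)
  case less
  show ?case
  proof (cases "b \<le> a + 1")
    case True
    then consider "b = a" | "b = a + 1"
      using less.prems by linarith
    then show ?thesis
      by cases simp_all
  next
    case False
    have "fact ((a + b) div 2) * fact ((a + b + 1) div 2) \<le> (fact (a + 1) * fact (b - 1) :: nat)"
      using less.hyps[of "b - 1" "a + 1"] False by simp
    also have "\<dots> = (a + 1) * (fact a * fact (b - 1))"
      by (simp add: algebra_simps)
    also have "\<dots> \<le> b * (fact a * fact (b - 1))"
      using False by (intro mult_le_mono1) simp
    also have "\<dots> = fact a * fact b"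
      using False by (cases b) (auto simp: algebra_simps)
    finally show ?thesis .
  qed
qed

lemma zeta_le_fact_mult_fact: "zeta (a + b + 1) \<le> fact a * fact b"
proof -
  have "zeta (a + b + 1) = real (fact ((a + b) div 2) * fact ((a + b + 1) div 2))"
  proof (cases "even (a + b)")
    case True
    then obtain m where "a + b = 2 * m"
      by (elim evenE)
    then show ?thesis
      by (simp add: zeta_def power2_eq_square)
  next
    case False
    then obtain m where "a + b = 2 * m + 1"
      by (elim oddE)
    then show ?thesis
      by (simp add: zeta_def algebra_simps)
  qed
  also have "\<dots> \<le> real (fact a * fact b)"
    unfolding of_nat_le_iff using fact_mid_mult_le_fact_mult[of a b] fact_mid_mult_le_fact_mult[of b a]
    by (cases "a \<le> b") (simp_all add: add.commute mult.commute)
  finally show ?thesis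
    by simp
qed

lemma zeta_pos: "0 < zeta n"
  by (simp add: zeta_def)

section \<open>Products of distances between separated nodes\<close>

lemma card_mult_le_Max_sub_of_separated:
  fixes S :: "real set"
  assumes "finite S" "S \<noteq> {}" "\<forall>t\<in>S. \<delta> \<le> t - c"
    and "\<forall>t\<in>S. \<forall>u\<in>S. t \<noteq> u \<longrightarrow> \<delta> \<le> \<bar>t - u\<bar>"
  shows "real (card S) * \<delta> \<le> Max S - c"
  using assms
proof (induction "card S" arbitrary: S)
  case 0
  then show ?case
    by simp
next
  case (Suc k)
  define S' where "S' = S - {Max S}"
  have Max: "Max S \<in> S"
    using Suc.prems(1,2) by simp
  have card_S': "k = card S'"
    using Suc.hyps(2) Max by (simp add: S'_def)
  show ?case
  proof (cases "S' = {}")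
    case True
    then have "card S = 1"
      using card_S' Suc.hyps(2) by simp
    then show ?thesis
      using Suc.prems(3) Max by simp
  next
    case False
    have "Max S' \<in> S" "Max S' \<noteq> Max S"
      using False Max_in[of S'] Suc.prems(1) by (auto simp: S'_def)
    moreover have "Max S' \<le> Max S"
      using Suc.prems(1) \<open>Max S' \<in> S\<close> by simp
    ultimately have "\<delta> \<le> Max S - Max S'"
      using Suc.prems(4) Max by fastforce
    moreover have "real k * \<delta> \<le> Max S' - c"
      unfolding card_S' using Suc.prems(1,3,4) False by (intro Suc.hyps(1)[OF card_S']) (auto simp: S'_def)
    ultimately show ?thesis
      using Suc.hyps(2)[symmetric] by (simp add: algebra_simps)
  qed
qed

lemma fact_mult_power_le_prod_sub_of_separated:
  fixes S :: "real set"
  assumes "finite S" "\<delta> \<ge> 0" "\<forall>t\<in>S. \<delta> \<le> t - c"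
    and "\<forall>t\<in>S. \<forall>u\<in>S. t \<noteq> u \<longrightarrow> \<delta> \<le> \<bar>t - u\<bar>"
  shows "\<delta> ^ card S * fact (card S) \<le> (\<Prod>t\<in>S. t - c)"
  using assms
proof (induction "card S" arbitrary: S)
  case 0
  then show ?case
    by simp
next
  case (Suc k)
  have ne: "S \<noteq> {}"
    using Suc.hyps(2) by auto
  then have Max: "Max S \<in> S"
    using Suc.prems(1) by simp
  have "\<delta> ^ Suc k * fact (Suc k) = (real (Suc k) * \<delta>) * (\<delta> ^ k * fact k)"
    by (simp add: algebra_simps)
  also have "\<dots> \<le> (Max S - c) * (\<Prod>t\<in>S - {Max S}. t - c)"
  proof (rule mult_mono)
    show "real (Suc k) * \<delta> \<le> Max S - c"
      using card_mult_le_Max_sub_of_separated[OF Suc.prems(1) ne Suc.prems(3,4)] Suc.hyps(2) by simp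
    show "\<delta> ^ k * fact k \<le> (\<Prod>t\<in>S - {Max S}. t - c)"
      using Suc.hyps(1)[of "S - {Max S}"] Suc.hyps(2)[symmetric] Suc.prems Max by simp
    show "0 \<le> Max S - c"
      using Suc.prems(2) bspec[OF Suc.prems(3) Max] by linarith
  qed (use Suc.prems in simp)
  also have "\<dots> = (\<Prod>t\<in>S. t - c)"
    using Suc.prems Max by (simp add: prod.remove)
  finally show ?case
    using Suc.hyps(2) by simp
qed

lemma zeta_mult_power_le_prod_dist:
  fixes y :: "nat \<Rightarrow> real"
  assumes inj: "inj_on y {..<n}" and j: "j < n" and "\<delta> \<ge> 0"
    and sep: "\<forall>p<n. \<forall>q<n. p \<noteq> q \<longrightarrow> \<delta> \<le> \<bar>y p - y q\<bar>"
  shows "\<delta> ^ (n - 1) * zeta n \<le> (\<Prod>k\<in>{..<n} - {j}. \<bar>y j - y k\<bar>)"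
proof -
  define U where "U = {k \<in> {..<n} - {j}. y j < y k}"
  define L where "L = {k \<in> {..<n} - {j}. y k < y j}"
  have "y k < y j \<or> y j < y k" if "k \<in> {..<n} - {j}" for k
    using inj j that unfolding inj_on_def by (metis DiffE lessThan_iff linorder_neqE_linordered_idom singletonI)
  then have split: "{..<n} - {j} = U \<union> L"
    unfolding U_def L_def by blast
  have disj: "U \<inter> L = {}"
    by (auto simp: U_def L_def)
  have "finite U" "finite L"
    by (auto simp: U_def L_def)
  then have "card U + card L = card ({..<n} - {j})"
    using card_Un_disjoint split disj by metis
  also have "\<dots> = n - 1"
    using j by simp
  finally have card: "card U + card L = n - 1" .
  then have zeta: "zeta n \<le> fact (card U) * fact (card L)"
    using zeta_le_fact_mult_fact[of "card U" "card L"] j by simp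
  have one_side: "\<delta> ^ card I * fact (card I) \<le> (\<Prod>k\<in>I. f k - c)"
    if "I \<subseteq> {..<n}" "inj_on f I" "\<forall>k\<in>I. \<delta> \<le> f k - c"
      "\<forall>k\<in>I. \<forall>l\<in>I. k \<noteq> l \<longrightarrow> \<delta> \<le> \<bar>f k - f l\<bar>" for I f c
  proof -
    have "finite I"
      using that(1) finite_subset by blast
    then show ?thesis
      using fact_mult_power_le_prod_sub_of_separated[of "f ` I" \<delta> c] that(2-4) \<open>\<delta> \<ge> 0\<close>
      by (simp add: card_image prod.reindex inj_on_eq_iff)
  qed
  have "\<delta> ^ card U * fact (card U) \<le> (\<Prod>k\<in>U. y k - y j)"
  proof (rule one_side)
    show "U \<subseteq> {..<n}" "inj_on y U"
      using inj by (auto simp: U_def inj_on_def)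
    show "\<forall>k\<in>U. \<delta> \<le> y k - y j"
      using sep j by (auto simp: U_def) (metis abs_of_pos diff_gt_0_iff_gt)
    show "\<forall>k\<in>U. \<forall>l\<in>U. k \<noteq> l \<longrightarrow> \<delta> \<le> \<bar>y k - y l\<bar>"
      using sep by (auto simp: U_def)
  qed
  also have "\<dots> = (\<Prod>k\<in>U. \<bar>y j - y k\<bar>)"
    by (intro prod.cong) (auto simp: U_def)
  finally have upper: "\<delta> ^ card U * fact (card U) \<le> (\<Prod>k\<in>U. \<bar>y j - y k\<bar>)" .
  have "\<delta> ^ card L * fact (card L) \<le> (\<Prod>k\<in>L. - y k - - y j)"
  proof (rule one_side)
    show "L \<subseteq> {..<n}" "inj_on (\<lambda>k. - y k) L"
      using inj by (auto simp: L_def inj_on_def)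
    show "\<forall>k\<in>L. \<delta> \<le> - y k - - y j"
      using sep j by (auto simp: L_def) (metis abs_of_neg diff_less_0_iff_less minus_diff_eq)
    show "\<forall>k\<in>L. \<forall>l\<in>L. k \<noteq> l \<longrightarrow> \<delta> \<le> \<bar>- y k - - y l\<bar>"
      using sep by (auto simp: L_def abs_minus_commute)
  qed
  also have "\<dots> = (\<Prod>k\<in>L. \<bar>y j - y k\<bar>)"
    by (intro prod.cong) (auto simp: L_def)
  finally have lower: "\<delta> ^ card L * fact (card L) \<le> (\<Prod>k\<in>L. \<bar>y j - y k\<bar>)" .
  have "\<delta> ^ (n - 1) * zeta n \<le> (\<delta> ^ card U * fact (card U)) * (\<delta> ^ card L * fact (card L))"
  proof -
    have "\<delta> ^ (n - 1) * zeta n \<le> \<delta> ^ (n - 1) * (fact (card U) * fact (card L))"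
      using zeta \<open>\<delta> \<ge> 0\<close> by (intro mult_left_mono) auto
    also have "\<dots> = (\<delta> ^ card U * fact (card U)) * (\<delta> ^ card L * fact (card L))"
      unfolding card[symmetric] power_add by (simp add: mult_ac)
    finally show ?thesis .
  qed
  also have "\<dots> \<le> (\<Prod>k\<in>U. \<bar>y j - y k\<bar>) * (\<Prod>k\<in>L. \<bar>y j - y k\<bar>)"
    using upper lower \<open>\<delta> \<ge> 0\<close> by (intro mult_mono) (auto intro: prod_nonneg)
  also have "\<dots> = (\<Prod>k\<in>{..<n} - {j}. \<bar>y j - y k\<bar>)"
    unfolding split by (rule prod.union_disjoint[symmetric]) (use disj in \<open>auto simp: U_def L_def\<close>)
  finally show ?thesis .
qed

lemma zeta_mult_power_le_prod_norm_exp_i_diff: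
  fixes \<theta> :: "nat \<Rightarrow> real"
  assumes "inj_on \<theta> {..<n}" "j < n" "\<delta> \<ge> 0"
    and "\<forall>p<n. \<forall>q<n. \<bar>\<theta> p - \<theta> q\<bar> \<le> pi"
    and "\<forall>p<n. \<forall>q<n. p \<noteq> q \<longrightarrow> \<delta> \<le> \<bar>\<theta> p - \<theta> q\<bar>"
  shows "(2 / pi) ^ (n - 1) * (\<delta> ^ (n - 1) * zeta n)
    \<le> (\<Prod>k\<in>{..<n} - {j}. cmod (exp (\<i> * of_real (\<theta> j)) - exp (\<i> * of_real (\<theta> k))))"
proof -
  have "(2 / pi) ^ (n - 1) * (\<delta> ^ (n - 1) * zeta n)
      \<le> (2 / pi) ^ (n - 1) * (\<Prod>k\<in>{..<n} - {j}. \<bar>\<theta> j - \<theta> k\<bar>)"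
    using zeta_mult_power_le_prod_dist[OF assms(1-3,5)] by (intro mult_left_mono) auto
  also have "\<dots> = (\<Prod>k\<in>{..<n} - {j}. 2 / pi * \<bar>\<theta> j - \<theta> k\<bar>)"
    unfolding prod.distrib using \<open>j < n\<close> by simp
  also have "\<dots> \<le> (\<Prod>k\<in>{..<n} - {j}. cmod (exp (\<i> * of_real (\<theta> j)) - exp (\<i> * of_real (\<theta> k))))"
    using assms(2,4) by (intro prod_mono conjI norm_exp_i_diff_ge) auto
  finally show ?thesis .
qed

section \<open>Lower bounds for Vandermonde matrices\<close>

lemma sum_norm_coeff_prod_linear_le:
  fixes z :: "'a \<Rightarrow> 'b :: real_normed_field"
  assumes "finite S"
  shows "(\<Sum>r<K. norm (coeff (\<Prod>k\<in>S. [:- z k, 1:]) r)) \<le> (\<Prod>k\<in>S. 1 + norm (z k))"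
  using assms
proof (induction S arbitrary: K rule: finite_induct)
  case empty
  have "(\<Sum>r<K. norm (coeff (1 :: 'b poly) r)) = (\<Sum>r<K. if r = 0 then 1 else 0)"
    by (intro sum.cong) auto
  then show ?case
    by simp
next
  case (insert a S)
  define P where "P = (\<Prod>k\<in>S. [:- z k, 1:])"
  have "(\<Sum>r<K. norm (coeff (\<Prod>k\<in>insert a S. [:- z k, 1:]) r))
      = (\<Sum>r<K. norm (coeff (pCons 0 P) r - z a * coeff P r))"
    using insert.hyps by (simp add: P_def mult_pCons_left)
  also have "\<dots> \<le> (\<Sum>r<K. norm (coeff (pCons 0 P) r) + norm (z a) * norm (coeff P r))"
    by (intro sum_mono) (metis norm_mult norm_triangle_ineq4)
  also have "\<dots> = (\<Sum>r<K. norm (coeff (pCons 0 P) r)) + norm (z a) * (\<Sum>r<K. norm (coeff P r))"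
    by (simp add: sum.distrib sum_distrib_left)
  also have "(\<Sum>r<K. norm (coeff (pCons 0 P) r)) \<le> (\<Prod>k\<in>S. 1 + norm (z k))"
  proof (cases K)
    case (Suc K')
    then show ?thesis
      using insert.IH[of K'] by (simp only: sum.lessThan_Suc_shift) (simp add: P_def)
  qed (simp add: prod_nonneg)
  also have "norm (z a) * (\<Sum>r<K. norm (coeff P r)) \<le> norm (z a) * (\<Prod>k\<in>S. 1 + norm (z k))"
    using insert.IH unfolding P_def by (intro mult_left_mono) auto
  finally show ?case
    using insert.hyps by (simp add: algebra_simps)
qed

lemma poly_eq_sum_lessThan:
  fixes p :: "'a :: comm_semiring_1 poly"
  assumes "degree p < K"
  shows "poly p x = (\<Sum>r<K. coeff p r * x ^ r)"
proof -
  have "poly p x = (\<Sum>r\<le>degree p. coeff p r * x ^ r)"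
    by (rule poly_altdef)
  also have "\<dots> = (\<Sum>r<K. coeff p r * x ^ r)"
    using assms by (intro sum.mono_neutral_left) (auto simp: coeff_eq_0)
  finally show ?thesis .
qed

lemma norm_mult_prod_dist_le_vandermonde:
  fixes z x :: "nat \<Rightarrow> complex"
  assumes j: "j < n" and z: "\<forall>k<n. cmod (z k) \<le> 1"
    and B: "\<forall>r<n. cmod (\<Sum>i<n. z i ^ r * x i) \<le> B"
  shows "cmod (x j) * (\<Prod>k\<in>{..<n} - {j}. cmod (z j - z k)) \<le> 2 ^ (n - 1) * B"
proof -
  define S where "S = {..<n} - {j}"
  define P where "P = (\<Prod>k\<in>S. [:- z k, 1:])"
  have "degree P \<le> card S"
    unfolding P_def using degree_prod_sum_le[of S "\<lambda>k. [:- z k, 1:]"] by (simp add: S_def)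
  then have deg: "degree P < n"
    using j by (simp add: S_def)
  have poly_P: "poly P w = (\<Prod>k\<in>S. w - z k)" for w
    by (simp add: P_def poly_prod)
  have "(\<Sum>r<n. coeff P r * (\<Sum>i<n. z i ^ r * x i)) = (\<Sum>r<n. \<Sum>i<n. x i * (coeff P r * z i ^ r))"
    by (simp add: sum_distrib_left mult_ac)
  also have "\<dots> = (\<Sum>i<n. x i * (\<Sum>r<n. coeff P r * z i ^ r))"
    by (subst sum.swap) (simp add: sum_distrib_left)
  also have "\<dots> = (\<Sum>i<n. x i * poly P (z i))"
    using deg by (simp add: poly_eq_sum_lessThan)
  also have "\<dots> = x j * poly P (z j) + (\<Sum>i\<in>{..<n} - {j}. x i * poly P (z i))"
    using j by (simp add: sum.remove)
  also have "(\<Sum>i\<in>{..<n} - {j}. x i * poly P (z i)) = 0"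
    by (intro sum.neutral) (auto simp: poly_P S_def)
  finally have interpolation: "(\<Sum>r<n. coeff P r * (\<Sum>i<n. z i ^ r * x i)) = x j * (\<Prod>k\<in>S. z j - z k)"
    by (simp add: poly_P)
  have "0 \<le> B"
    using order_trans[OF norm_ge_zero B[rule_format, of 0]] j by simp
  have "cmod (x j) * (\<Prod>k\<in>S. cmod (z j - z k)) = cmod (\<Sum>r<n. coeff P r * (\<Sum>i<n. z i ^ r * x i))"
    unfolding interpolation by (simp add: norm_mult prod_norm)
  also have "\<dots> \<le> (\<Sum>r<n. cmod (coeff P r) * B)"
    using B by (intro order_trans[OF norm_sum] sum_mono) (auto simp: norm_mult intro: mult_left_mono)
  also have "\<dots> = (\<Sum>r<n. cmod (coeff P r)) * B"
    by (simp add: sum_distrib_right)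
  also have "\<dots> \<le> (\<Prod>k\<in>S. 1 + cmod (z k)) * B"
    using sum_norm_coeff_prod_linear_le[of S z n] \<open>0 \<le> B\<close>
    by (intro mult_right_mono) (simp_all add: P_def S_def)
  also have "\<dots> \<le> 2 ^ (n - 1) * B"
  proof -
    have "(\<Prod>k\<in>S. 1 + cmod (z k)) \<le> (\<Prod>k\<in>S. 2)"
      using z by (intro prod_mono) (auto simp: S_def)
    then show ?thesis
      using j \<open>0 \<le> B\<close> by (intro mult_right_mono) (simp_all add: S_def)
  qed
  finally show ?thesis
    by (simp add: S_def)
qed

lemma vandermonde_norm_lower_bound:
  fixes z x :: "nat \<Rightarrow> complex"
  assumes "n \<le> N" and "\<forall>k<n. cmod (z k) \<le> 1" and "\<kappa> \<ge> 0"
    and sep: "\<forall>j<n. 2 ^ (n - 1) * \<kappa> \<le> (\<Prod>k\<in>{..<n} - {j}. cmod (z j - z k))"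
  shows "\<kappa>^2 * (\<Sum>j<n. cmod (x j)^2) \<le> n * (\<Sum>k<N. cmod (\<Sum>j<n. z j ^ k * x j)^2)"
proof -
  define B where "B = sqrt (\<Sum>k<N. cmod (\<Sum>j<n. z j ^ k * x j)^2)"
  have "cmod (\<Sum>i<n. z i ^ r * x i) \<le> B" if "r < N" for r
    unfolding B_def using that by (intro real_le_rsqrt member_le_sum) auto
  then have coord: "cmod (x j) * (\<Prod>k\<in>{..<n} - {j}. cmod (z j - z k)) \<le> 2 ^ (n - 1) * B" if "j < n" for j
    using norm_mult_prod_dist_le_vandermonde[OF that assms(2)] \<open>n \<le> N\<close> by simp
  have "\<kappa> * cmod (x j) \<le> B" if "j < n" for j
  proof -
    have "cmod (x j) * (2 ^ (n - 1) * \<kappa>) \<le> cmod (x j) * (\<Prod>k\<in>{..<n} - {j}. cmod (z j - z k))"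
      using sep that by (intro mult_left_mono) auto
    moreover have "2 ^ (n - 1) * (\<kappa> * cmod (x j)) = cmod (x j) * (2 ^ (n - 1) * \<kappa>)"
      by (simp add: mult_ac)
    ultimately have "2 ^ (n - 1) * (\<kappa> * cmod (x j)) \<le> 2 ^ (n - 1) * B"
      using coord[OF that] by linarith
    then show ?thesis
      by simp
  qed
  then have "(\<Sum>j<n. \<kappa>^2 * cmod (x j)^2) \<le> (\<Sum>j<n. B^2)"
    using \<open>\<kappa> \<ge> 0\<close> by (intro sum_mono) (simp add: power_mult_distrib[symmetric] power_mono)
  then show ?thesis
    by (simp add: B_def sum_distrib_left sum_nonneg)
qed

section \<open>Singular values\<close>

lemma mult_le_weighted_squares:
  fixes a b s :: real
  assumes "s > 0"
  shows "a * b \<le> (s * a^2 + b^2 / s) / 2"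
proof -
  have "0 \<le> (s * a - b)^2 / s"
    using assms by simp
  also have "\<dots> = s * a^2 - 2 * a * b + b^2 / s"
    using assms by (simp add: power2_eq_square field_simps)
  finally show ?thesis
    by simp
qed

lemma lower_bound_adjoint_mult:
  fixes V :: "nat \<Rightarrow> nat \<Rightarrow> complex" and x :: "nat \<Rightarrow> complex"
  assumes "\<sigma> > 0"
    and V: "\<And>x. \<sigma> * (\<Sum>j<n. cmod (x j)^2) \<le> (\<Sum>k<N. cmod (\<Sum>j<n. V k j * x j)^2)"
  shows "\<sigma> * (\<Sum>l<N. cmod (\<Sum>j<n. V l j * x j)^2)
    \<le> (\<Sum>p<n. cmod (\<Sum>l<N. cnj (V l p) * (\<Sum>j<n. V l j * x j))^2)"
proof -
  define t where "t l = (\<Sum>j<n. V l j * x j)" for l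
  define g where "g p = (\<Sum>l<N. cnj (V l p) * t l)" for p
  define T where "T = (\<Sum>l<N. cmod (t l)^2)"
  define G where "G = (\<Sum>p<n. cmod (g p)^2)"
  define X where "X = (\<Sum>j<n. cmod (x j)^2)"
  have "complex_of_real T = (\<Sum>l<N. cnj (t l) * t l)"
    unfolding T_def of_real_sum complex_norm_square by (simp add: mult.commute)
  also have "\<dots> = (\<Sum>l<N. \<Sum>j<n. x j * (V l j * cnj (t l)))"
  proof -
    have "c * t l = (\<Sum>j<n. x j * (V l j * c))" for c l
      by (simp add: t_def sum_distrib_left mult_ac)
    then show ?thesis
      by (intro sum.cong refl)
  qed
  also have "\<dots> = (\<Sum>j<n. x j * cnj (g j))"
    by (subst sum.swap) (simp add: g_def sum_distrib_left)
  finally have "cmod (\<Sum>j<n. x j * cnj (g j)) = \<bar>T\<bar>"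
    by (metis norm_of_real)
  then have "T \<le> cmod (\<Sum>j<n. x j * cnj (g j))"
    by simp
  also have "\<dots> \<le> (\<Sum>j<n. cmod (x j) * cmod (g j))"
    by (rule order_trans[OF norm_sum]) (simp add: norm_mult)
  also have "\<dots> \<le> (\<Sum>j<n. (\<sigma> * cmod (x j)^2 + cmod (g j)^2 / \<sigma>) / 2)"
    using \<open>\<sigma> > 0\<close> by (intro sum_mono mult_le_weighted_squares)
  also have "\<dots> = (\<sigma> * X + G / \<sigma>) / 2"
    by (simp add: X_def G_def sum.distrib sum_distrib_left sum_divide_distrib[symmetric])
  finally have "T \<le> (\<sigma> * X + G / \<sigma>) / 2" .
  moreover have "\<sigma> * X \<le> T"
    using V[of x] by (simp add: X_def T_def t_def)
  ultimately have "T \<le> (T + G / \<sigma>) / 2"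
    by (meson add_right_mono divide_right_mono order_trans zero_le_numeral)
  then have "T \<le> G / \<sigma>"
    by (simp add: field_simps)
  then have "\<sigma> * T \<le> G"
    using \<open>\<sigma> > 0\<close> by (simp add: field_simps)
  then show ?thesis
    by (simp add: T_def G_def g_def t_def)
qed

lemma lower_bound_diag_transpose_mult:
  fixes V :: "nat \<Rightarrow> nat \<Rightarrow> complex" and d w x :: "nat \<Rightarrow> complex"
  assumes "\<sigma> > 0" and "m \<ge> 0" and d: "\<forall>p<n. m \<le> cmod (d p)"
    and V: "\<And>x. \<sigma> * (\<Sum>j<n. cmod (x j)^2) \<le> (\<Sum>k<N. cmod (\<Sum>j<n. V k j * x j)^2)"
    and w: "\<forall>l<N. w l = cnj (\<Sum>j<n. V l j * x j)"
  shows "(m * \<sigma>)^2 * (\<Sum>l<N. cmod (w l)^2)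
    \<le> (\<Sum>k<N. cmod (\<Sum>p<n. V k p * (d p * (\<Sum>l<N. V l p * w l)))^2)"
proof -
  define u where "u p = (\<Sum>l<N. V l p * w l)" for p
  have "\<sigma> * (\<Sum>l<N. cmod (w l)^2) \<le> (\<Sum>p<n. cmod (u p)^2)"
  proof -
    have "cmod (u p) = cmod (\<Sum>l<N. cnj (V l p) * (\<Sum>j<n. V l j * x j))" for p
      unfolding u_def by (subst complex_mod_cnj[symmetric]) (simp add: w)
    moreover have "(\<Sum>l<N. cmod (w l)^2) = (\<Sum>l<N. cmod (\<Sum>j<n. V l j * x j)^2)"
      by (intro sum.cong refl) (simp only: w[rule_format] complex_mod_cnj lessThan_iff)
    ultimately show ?thesis
      using lower_bound_adjoint_mult[OF \<open>\<sigma> > 0\<close> V, of x] by simp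
  qed
  then have "m^2 * (\<sigma> * (\<Sum>l<N. cmod (w l)^2)) \<le> m^2 * (\<Sum>p<n. cmod (u p)^2)"
    by (intro mult_left_mono) simp_all
  also have "\<dots> = (\<Sum>p<n. m^2 * cmod (u p)^2)"
    by (simp add: sum_distrib_left)
  also have "\<dots> \<le> (\<Sum>p<n. cmod (d p * u p)^2)"
    using d \<open>m \<ge> 0\<close>
    by (intro sum_mono) (auto simp: norm_mult power_mult_distrib intro!: mult_right_mono power_mono)
  finally have "(m * \<sigma>)^2 * (\<Sum>l<N. cmod (w l)^2) \<le> \<sigma> * (\<Sum>p<n. cmod (d p * u p)^2)"
    using \<open>\<sigma> > 0\<close> by (simp add: power2_eq_square mult_ac mult_left_mono)
  also have "\<dots> \<le> (\<Sum>k<N. cmod (\<Sum>p<n. V k p * (d p * u p))^2)"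
    by (rule V)
  finally show ?thesis
    by (simp add: u_def)
qed

interpretation const_poly_hom: comm_ring_hom "\<lambda>a :: 'a :: comm_ring_1. [:a:]"
  by unfold_locales auto

lemma char_poly_matrix_mult:
  fixes X Y :: "'a :: comm_ring_1 mat"
  assumes "X \<in> carrier_mat N n" "Y \<in> carrier_mat n N"
  shows "char_poly_matrix (X * Y)
    = [:0, 1:] \<cdot>\<^sub>m 1\<^sub>m N - map_mat (\<lambda>a. [:a:]) X * map_mat (\<lambda>a. [:a:]) Y"
proof -
  have "map_mat (\<lambda>a. [:a:]) (X * Y) = map_mat (\<lambda>a. [:a:]) X * map_mat (\<lambda>a. [:a:]) Y"
    by (rule const_poly_hom.mat_hom_mult[OF assms])
  then have "(map_mat (\<lambda>a. [:a:]) X * map_mat (\<lambda>a. [:a:]) Y) $$ (i, j) = [:(X * Y) $$ (i, j):]"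
    if "i < N" "j < N" for i j
    using assms that by (metis carrier_matD index_map_mat index_mult_mat)
  then show ?thesis
    using assms unfolding char_poly_matrix_def
    by (intro eq_matI) (auto simp del: index_mult_mat(1))
qed

lemma char_poly_mult_swap:
  fixes X Y :: "'a :: idom mat"
  assumes X: "X \<in> carrier_mat N n" and Y: "Y \<in> carrier_mat n N" and "n \<le> N"
  shows "char_poly (X * Y) = [:0, 1:] ^ (N - n) * char_poly (Y * X)"
proof -
  define x :: "'a poly" where "x = [:0, 1:]"
  define Xp where "Xp = map_mat (\<lambda>a. [:a:]) X"
  define Yp where "Yp = map_mat (\<lambda>a. [:a:]) Y"
  have Xp: "Xp \<in> carrier_mat N n" and Yp: "Yp \<in> carrier_mat n N"
    using X Y by (auto simp: Xp_def Yp_def)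
  define B where "B = four_block_mat (x \<cdot>\<^sub>m 1\<^sub>m N) Xp Yp (1\<^sub>m n)"
  \<comment> \<open>Chosen so that both products \<open>L * B\<close> and \<open>B * L\<close> are block triangular.\<close>
  define L where "L = four_block_mat (1\<^sub>m N) (0\<^sub>m N n) (- Yp) (x \<cdot>\<^sub>m 1\<^sub>m n)"
  have B: "B \<in> carrier_mat (N + n) (N + n)" and L: "L \<in> carrier_mat (N + n) (N + n)"
    using Xp Yp by (auto simp: B_def L_def)
  have L_B: "L * B = four_block_mat (x \<cdot>\<^sub>m 1\<^sub>m N) Xp (0\<^sub>m n N) (x \<cdot>\<^sub>m 1\<^sub>m n - Yp * Xp)"
    unfolding L_def B_def using Xp Yp by (subst mult_four_block_mat) auto
  have "det (L * B) = x ^ N * det (x \<cdot>\<^sub>m 1\<^sub>m n - Yp * Xp)"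
    unfolding L_B by (subst det_four_block_mat_lower_left_zero[of _ N _ n]) (use Xp Yp in auto)
  then have LB: "det (L * B) = x ^ N * char_poly (Y * X)"
    unfolding char_poly_def char_poly_matrix_mult[OF Y X] by (simp add: Xp_def Yp_def x_def)
  have B_L: "B * L = four_block_mat (x \<cdot>\<^sub>m 1\<^sub>m N - Xp * Yp) (x \<cdot>\<^sub>m Xp) (0\<^sub>m n N) (x \<cdot>\<^sub>m 1\<^sub>m n)"
    unfolding L_def B_def using Xp Yp by (subst mult_four_block_mat) auto
  have "det (B * L) = det (x \<cdot>\<^sub>m 1\<^sub>m N - Xp * Yp) * x ^ n"
    unfolding B_L by (subst det_four_block_mat_lower_left_zero[of _ N _ n]) (use Xp Yp in auto)
  then have BL: "det (B * L) = char_poly (X * Y) * x ^ n"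
    unfolding char_poly_def char_poly_matrix_mult[OF X Y] by (simp add: Xp_def Yp_def x_def)
  have "x ^ n * char_poly (X * Y) = x ^ N * char_poly (Y * X)"
    using LB BL det_mult[OF L B] det_mult[OF B L] by (simp add: mult.commute)
  also have "x ^ N = x ^ n * x ^ (N - n)"
    using \<open>n \<le> N\<close> by (simp flip: power_add)
  finally have "x ^ n * char_poly (X * Y) = x ^ n * (x ^ (N - n) * char_poly (Y * X))"
    by (simp only: mult.assoc)
  moreover have "x ^ n \<noteq> 0"
    by (simp add: x_def)
  ultimately show ?thesis
    by (simp add: x_def)
qed

lemma nth_rev_sorted_list_of_multiset_ge:
  fixes S :: "'a :: linorder multiset"
  assumes "n \<le> size (filter_mset (\<lambda>v. c \<le> v) S)" and "1 \<le> n"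
  shows "c \<le> rev (sorted_list_of_multiset S) ! (n - 1)"
proof (rule ccontr)
  define L where "L = rev (sorted_list_of_multiset S)"
  assume "\<not> ?thesis"
  then have less: "L ! (n - 1) < c"
    by (simp add: L_def)
  have "length L = size S"
    by (simp add: L_def flip: size_mset)
  then have "n \<le> length L"
    using assms(1) size_filter_mset_lesseq[of _ S] order_trans by metis
  have "sorted_wrt (\<ge>) L"
    by (simp add: L_def sorted_wrt_rev)
  then have below: "L ! i < c" if "n - 1 \<le> i" "i < length L" for i
    using less that sorted_wrt_nth_less[of "(\<ge>)" L "n - 1" i] by (cases "i = n - 1") auto
  have "\<forall>v\<in>set (drop (n - 1) L). v < c"
  proof
    fix v
    assume "v \<in> set (drop (n - 1) L)"
    then obtain i where "i < length L - (n - 1)" "v = L ! (n - 1 + i)"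
      by (auto simp: in_set_conv_nth)
    then show "v < c"
      using below[of "n - 1 + i"] by simp
  qed
  then have "filter (\<lambda>v. c \<le> v) (drop (n - 1) L) = []"
    by (auto simp: filter_empty_conv)
  then have "size (filter_mset (\<lambda>v. c \<le> v) S) = length (filter (\<lambda>v. c \<le> v) (take (n - 1) L))"
    by (metis L_def append_Nil2 append_take_drop_id filter_append mset_filter mset_rev
        mset_sorted_list_of_multiset size_mset)
  also have "\<dots> \<le> n - 1"
    by (metis length_filter_le length_take min.bounded_iff nle_le)
  finally show False
    using assms by simp
qed

lemma dim_mat_adjoint [simp]:
  "dim_row (mat_adjoint M) = dim_col M" "dim_col (mat_adjoint M) = dim_row M"
  by (simp_all add: mat_adjoint_def mat_of_rows_def)

lemma index_mat_adjoint [simp]: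
  fixes M :: "complex mat"
  assumes "i < dim_col M" "k < dim_row M"
  shows "mat_adjoint M $$ (i, k) = cnj (M $$ (k, i))"
  using assms by (simp add: mat_adjoint_def mat_of_rows_def)

lemma eigenvalue_adjoint_mult_eq:
  fixes M :: "complex mat"
  assumes M: "M \<in> carrier_mat K N" and w: "w \<in> carrier_vec N"
    and ev: "(mat_adjoint M * M) *\<^sub>v w = ev \<cdot>\<^sub>v w"
  shows "ev * complex_of_real (\<Sum>i<N. cmod (w $ i)^2) = complex_of_real (\<Sum>k<K. cmod ((M *\<^sub>v w) $ k)^2)"
proof -
  define q where "q = M *\<^sub>v w"
  have q: "q $ k = (\<Sum>i<N. M $$ (k, i) * w $ i)" if "k < K" for k
    using M w that by (simp add: q_def scalar_prod_def atLeast0LessThan)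
  have adjoint_M: "mat_adjoint M \<in> carrier_mat N K"
    using M by (auto intro: carrier_matI)
  have "ev * complex_of_real (\<Sum>i<N. cmod (w $ i)^2) = (\<Sum>i<N. cnj (w $ i) * (ev * w $ i))"
    unfolding of_real_sum complex_norm_square sum_distrib_left by (simp add: mult_ac)
  also have "\<dots> = (\<Sum>i<N. cnj (w $ i) * (mat_adjoint M *\<^sub>v q) $ i)"
  proof (intro sum.cong refl)
    fix i
    assume "i \<in> {..<N}"
    then have "ev * w $ i = ((mat_adjoint M * M) *\<^sub>v w) $ i"
      using w by (simp add: ev)
    also have "\<dots> = (mat_adjoint M *\<^sub>v q) $ i"
      using adjoint_M M w by (simp add: q_def assoc_mult_mat_vec)
    finally show "cnj (w $ i) * (ev * w $ i) = cnj (w $ i) * (mat_adjoint M *\<^sub>v q) $ i"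
      by simp
  qed
  also have "\<dots> = (\<Sum>i<N. \<Sum>k<K. cnj (w $ i) * (cnj (M $$ (k, i)) * q $ k))"
    using M adjoint_M by (intro sum.cong refl) (simp add: q_def scalar_prod_def atLeast0LessThan sum_distrib_left)
  also have "\<dots> = (\<Sum>k<K. q $ k * cnj (\<Sum>i<N. M $$ (k, i) * w $ i))"
    by (subst sum.swap) (simp add: sum_distrib_left mult_ac)
  also have "\<dots> = complex_of_real (\<Sum>k<K. cmod (q $ k)^2)"
    unfolding of_real_sum complex_norm_square by (intro sum.cong refl) (simp add: q)
  finally show ?thesis
    by (simp add: q_def)
qed

lemma sigma_ge_of_char_poly_eq:
  fixes M K :: "complex mat"
  assumes K: "K \<in> carrier_mat n n" and "1 \<le> n" and "0 \<le> c"
    and char_poly: "char_poly (mat_adjoint M * M) = [:0, 1:] ^ k * char_poly K"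
    and roots: "\<And>ev. poly (char_poly K) ev = 0 \<Longrightarrow> c^2 \<le> Re ev"
  shows "c \<le> sigma n M"
proof -
  define f :: "complex \<Rightarrow> real" where "f z = sqrt (Re z)" for z
  have "char_poly K \<noteq> 0" and "degree (char_poly K) = n"
    using degree_monic_char_poly[OF K] by auto
  then have "size (image_mset f (proots (char_poly K))) = n"
    by (simp add: size_proots_complex)
  moreover have "c \<le> f z" if "z \<in># proots (char_poly K)" for z
    using roots[of z] that \<open>char_poly K \<noteq> 0\<close> \<open>0 \<le> c\<close> real_le_rsqrt by (auto simp: f_def)
  then have "filter_mset (\<lambda>v. c \<le> v) (image_mset f (proots (char_poly K))) = image_mset f (proots (char_poly K))"
    by (auto simp: filter_mset_eq_conv)
  ultimately have "n = size (filter_mset (\<lambda>v. c \<le> v) (image_mset f (proots (char_poly K))))"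
    by simp
  also have "\<dots> \<le> size (filter_mset (\<lambda>v. c \<le> v) (image_mset f (proots (char_poly (mat_adjoint M * M)))))"
    unfolding char_poly using \<open>char_poly K \<noteq> 0\<close> by (simp add: proots_mult image_mset_union)
  finally show ?thesis
    using nth_rev_sorted_list_of_multiset_ge \<open>1 \<le> n\<close>
    unfolding sigma_def singular_values_def f_def by blast
qed

lemma mat_adjoint_eq_factorization:
  fixes M :: "complex mat" and V :: "nat \<Rightarrow> nat \<Rightarrow> complex"
  assumes M: "M \<in> carrier_mat N N"
    and M_entry: "\<And>k l. k < N \<Longrightarrow> l < N \<Longrightarrow> M $$ (k, l) = (\<Sum>p<n. V k p * d p * V l p)"
  shows "mat_adjoint M = mat N n (\<lambda>(l, p). cnj (V l p)) * mat n N (\<lambda>(p, k). cnj (d p * V k p))"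
  using M by (intro eq_matI) (auto simp: M_entry scalar_prod_def atLeast0LessThan mult_ac)

lemma eigenvalue_adjoint_mult_ge:
  fixes M :: "complex mat" and V :: "nat \<Rightarrow> nat \<Rightarrow> complex" and d x :: "nat \<Rightarrow> complex"
  assumes M: "M \<in> carrier_mat N N"
    and M_entry: "\<And>k l. k < N \<Longrightarrow> l < N \<Longrightarrow> M $$ (k, l) = (\<Sum>p<n. V k p * d p * V l p)"
    and "\<sigma> > 0" "m \<ge> 0" and d: "\<forall>p<n. m \<le> cmod (d p)"
    and V: "\<And>x. \<sigma> * (\<Sum>j<n. cmod (x j)^2) \<le> (\<Sum>k<N. cmod (\<Sum>j<n. V k j * x j)^2)"
    and w: "w \<in> carrier_vec N" and w_entry: "\<forall>l<N. w $ l = cnj (\<Sum>j<n. V l j * x j)"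
    and "j < n" "x j \<noteq> 0"
    and ev: "(mat_adjoint M * M) *\<^sub>v w = ev \<cdot>\<^sub>v w"
  shows "(m * \<sigma>)^2 \<le> Re ev"
proof -
  have "(m * \<sigma>)^2 * (\<Sum>l<N. cmod (w $ l)^2)
      \<le> (\<Sum>k<N. cmod (\<Sum>p<n. V k p * (d p * (\<Sum>l<N. V l p * w $ l)))^2)"
    using lower_bound_diag_transpose_mult[OF \<open>\<sigma> > 0\<close> \<open>m \<ge> 0\<close> d V w_entry] .
  also have "\<dots> = (\<Sum>k<N. cmod ((M *\<^sub>v w) $ k)^2)"
    using M w by (intro sum.cong refl) (simp add: M_entry scalar_prod_def atLeast0LessThan
        sum_distrib_left sum_distrib_right mult_ac sum.swap[of _ "{..<N}"])
  also have "\<dots> = Re ev * (\<Sum>l<N. cmod (w $ l)^2)"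
    using arg_cong[OF eigenvalue_adjoint_mult_eq[OF M w ev], of Re] by simp
  finally have bound: "(m * \<sigma>)^2 * (\<Sum>l<N. cmod (w $ l)^2) \<le> Re ev * (\<Sum>l<N. cmod (w $ l)^2)" .
  have "0 < \<sigma> * (\<Sum>j<n. cmod (x j)^2)"
    using \<open>\<sigma> > 0\<close> \<open>j < n\<close> \<open>x j \<noteq> 0\<close> by (intro mult_pos_pos sum_pos2[of _ j]) auto
  also have "\<dots> \<le> (\<Sum>l<N. cmod (\<Sum>j<n. V l j * x j)^2)"
    by (rule V)
  also have "\<dots> = (\<Sum>l<N. cmod (w $ l)^2)"
    by (intro sum.cong refl) (simp only: w_entry[rule_format] complex_mod_cnj lessThan_iff)
  finally show ?thesis
    using bound mult_right_le_imp_le by metis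
qed

lemma sigma_ge_of_factorization:
  fixes M :: "complex mat" and V :: "nat \<Rightarrow> nat \<Rightarrow> complex" and d :: "nat \<Rightarrow> complex"
  assumes M: "M \<in> carrier_mat N N"
    and M_entry: "\<And>k l. k < N \<Longrightarrow> l < N \<Longrightarrow> M $$ (k, l) = (\<Sum>p<n. V k p * d p * V l p)"
    and "1 \<le> n" "n \<le> N" "\<sigma> > 0" "m \<ge> 0" and d: "\<forall>p<n. m \<le> cmod (d p)"
    and V: "\<And>x. \<sigma> * (\<Sum>j<n. cmod (x j)^2) \<le> (\<Sum>k<N. cmod (\<Sum>j<n. V k j * x j)^2)"
  shows "m * \<sigma> \<le> sigma n M"
proof -
  define X where "X = mat N n (\<lambda>(l, p). cnj (V l p))"
  define Y where "Y = mat n N (\<lambda>(p, k). cnj (d p * V k p)) * M"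
  have X: "X \<in> carrier_mat N n" and Y: "Y \<in> carrier_mat n N"
    using M by (auto simp: X_def Y_def)
  have "mat_adjoint M = X * mat n N (\<lambda>(p, k). cnj (d p * V k p))"
    unfolding X_def using M M_entry by (rule mat_adjoint_eq_factorization)
  then have adjoint_mult: "mat_adjoint M * M = X * Y"
    unfolding Y_def using M X by (simp add: assoc_mult_mat[of X N n _ N M N])
  have "(m * \<sigma>)^2 \<le> Re ev" if root: "poly (char_poly (Y * X)) ev = 0" for ev
  proof -
    obtain v where v: "v \<in> carrier_vec n" "v \<noteq> 0\<^sub>v n" "Y *\<^sub>v (X *\<^sub>v v) = ev \<cdot>\<^sub>v v"
      using eigenvalue_root_char_poly[of "Y * X" n ev] X Y root
      unfolding eigenvalue_def eigenvector_def by auto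
    obtain j where "j < n" "v $ j \<noteq> 0"
      using v(1,2) by (metis eq_vecI carrier_vecD index_zero_vec)
    show ?thesis
    proof (rule eigenvalue_adjoint_mult_ge[OF M M_entry \<open>\<sigma> > 0\<close> \<open>m \<ge> 0\<close> d V])
      show "X *\<^sub>v v \<in> carrier_vec N"
        using X v(1) by simp
      show "\<forall>l<N. (X *\<^sub>v v) $ l = cnj (\<Sum>j<n. V l j * cnj (v $ j))"
        using v(1) by (simp add: X_def scalar_prod_def atLeast0LessThan)
      show "(mat_adjoint M * M) *\<^sub>v (X *\<^sub>v v) = ev \<cdot>\<^sub>v (X *\<^sub>v v)"
        using X Y v by (simp add: adjoint_mult mult_mat_vec)
    qed (use \<open>j < n\<close> \<open>v $ j \<noteq> 0\<close> in auto)
  qed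
  then show ?thesis
    using sigma_ge_of_char_poly_eq[of "Y * X" n "m * \<sigma>" M "N - n"] X Y adjoint_mult
      char_poly_mult_swap[OF X Y \<open>n \<le> N\<close>] \<open>1 \<le> n\<close> \<open>\<sigma> > 0\<close> \<open>m \<ge> 0\<close> by auto
qed

section \<open>The matrix \<open>D A D\<^sup>T\<close>\<close>

lemma carrier_Dmat_Amat_transpose:
  "Dmat s n \<Omega> y * Amat n \<Omega> y a * transpose_mat (Dmat s n \<Omega> y) \<in> carrier_mat (s + 1) (s + 1)"
  by (rule carrier_matI) (simp_all add: Dmat_def Amat_def)

lemma index_Dmat_Amat_transpose:
  assumes "k < s + 1" "l < s + 1"
  shows "(Dmat s n \<Omega> y * Amat n \<Omega> y a * transpose_mat (Dmat s n \<Omega> y)) $$ (k, l)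
    = (\<Sum>p<n. exp (\<i> * of_real (y p * \<Omega> / real s)) ^ k * (exp (- \<i> * of_real (y p * \<Omega>)) * a p)
        * exp (\<i> * of_real (y p * \<Omega> / real s)) ^ l)"
proof -
  have "(Dmat s n \<Omega> y * Amat n \<Omega> y a) $$ (k, p)
      = exp (\<i> * of_real (y p * \<Omega> / real s)) ^ k * (exp (- \<i> * of_real (y p * \<Omega>)) * a p)" if "p < n" for p
    using assms that by (simp add: Dmat_def Amat_def scalar_prod_def sum.delta' if_distrib cong: if_cong)
  then show ?thesis
    using assms by (simp add: Dmat_def Amat_def scalar_prod_def atLeast0LessThan)
qed

lemma Dmat_lower_bound:
  fixes y :: "nat \<Rightarrow> real" and x :: "nat \<Rightarrow> complex"
  assumes "0 < n" "n \<le> s" "\<Omega> > 0" and y: "\<forall>j<n. \<bar>y j\<bar> \<le> real (n - 1) * pi / (2 * \<Omega>)"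
    and inj: "inj_on y {..<n}" and "\<delta> \<ge> 0"
    and sep: "\<forall>p<n. \<forall>q<n. p \<noteq> q \<longrightarrow> \<delta> \<le> \<bar>y p - y q\<bar>"
  shows "(zeta n * (\<Omega> / real s * \<delta>) ^ (n - 1) / pi ^ (n - 1))^2 / n * (\<Sum>j<n. cmod (x j)^2)
    \<le> (\<Sum>k<s + 1. cmod (\<Sum>j<n. exp (\<i> * of_real (y j * \<Omega> / real s)) ^ k * x j)^2)"
proof -
  define \<theta> where "\<theta> j = y j * \<Omega> / real s" for j
  define \<kappa> where "\<kappa> = zeta n * (\<Omega> / real s * \<delta>) ^ (n - 1) / pi ^ (n - 1)"
  have "s > 0"
    using assms by simp
  have \<theta>_diff: "\<bar>\<theta> p - \<theta> q\<bar> = \<Omega> / real s * \<bar>y p - y q\<bar>" for p q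
  proof -
    have "\<theta> p - \<theta> q = \<Omega> / real s * (y p - y q)"
      using \<open>s > 0\<close> by (simp add: \<theta>_def field_simps)
    then show ?thesis
      using \<open>\<Omega> > 0\<close> by (simp add: abs_mult)
  qed
  have "inj_on \<theta> {..<n}"
    using inj \<open>\<Omega> > 0\<close> \<open>s > 0\<close> by (simp add: \<theta>_def inj_on_def)
  moreover have "\<bar>\<theta> p - \<theta> q\<bar> \<le> pi" if "p < n" "q < n" for p q
  proof -
    have "\<bar>y p - y q\<bar> \<le> \<bar>y p\<bar> + \<bar>y q\<bar>"
      by (rule abs_triangle_ineq4)
    also have "\<dots> \<le> real (n - 1) * pi / (2 * \<Omega>) + real (n - 1) * pi / (2 * \<Omega>)"
      using y that by (intro add_mono) auto
    finally have "\<bar>y p - y q\<bar> \<le> real (n - 1) * pi / \<Omega>"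
      by (simp add: mult.commute)
    then have "\<bar>\<theta> p - \<theta> q\<bar> \<le> \<Omega> / real s * (real (n - 1) * pi / \<Omega>)"
      unfolding \<theta>_diff using \<open>\<Omega> > 0\<close> by (intro mult_left_mono) auto
    also have "\<dots> = real (n - 1) / real s * pi"
      using \<open>\<Omega> > 0\<close> by simp
    also have "\<dots> \<le> pi"
      using \<open>n \<le> s\<close> \<open>s > 0\<close> by (simp add: field_simps)
    finally show ?thesis .
  qed
  moreover have "\<Omega> / real s * \<delta> \<le> \<bar>\<theta> p - \<theta> q\<bar>" if "p < n" "q < n" "p \<noteq> q" for p q
    unfolding \<theta>_diff using sep that \<open>\<Omega> > 0\<close> by (intro mult_left_mono) auto
  ultimately have "(2 / pi) ^ (n - 1) * ((\<Omega> / real s * \<delta>) ^ (n - 1) * zeta n)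
      \<le> (\<Prod>k\<in>{..<n} - {j}. cmod (exp (\<i> * of_real (\<theta> j)) - exp (\<i> * of_real (\<theta> k))))" if "j < n" for j
    using that \<open>\<Omega> > 0\<close> \<open>\<delta> \<ge> 0\<close> by (intro zeta_mult_power_le_prod_norm_exp_i_diff) auto
  then have "\<forall>j<n. 2 ^ (n - 1) * \<kappa>
      \<le> (\<Prod>k\<in>{..<n} - {j}. cmod (exp (\<i> * of_real (\<theta> j)) - exp (\<i> * of_real (\<theta> k))))"
    by (simp add: \<kappa>_def power_divide mult_ac)
  then have "\<kappa>^2 * (\<Sum>j<n. cmod (x j)^2)
      \<le> n * (\<Sum>k<s + 1. cmod (\<Sum>j<n. exp (\<i> * of_real (\<theta> j)) ^ k * x j)^2)"
    using \<open>n \<le> s\<close> \<open>\<Omega> > 0\<close> \<open>\<delta> \<ge> 0\<close> zeta_pos[of n]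
    by (intro vandermonde_norm_lower_bound) (auto simp: \<kappa>_def norm_exp_eq_Re)
  then have "\<kappa>^2 / n * (\<Sum>j<n. cmod (x j)^2)
      \<le> (\<Sum>k<s + 1. cmod (\<Sum>j<n. exp (\<i> * of_real (\<theta> j)) ^ k * x j)^2)"
    using \<open>0 < n\<close> by (simp add: field_simps)
  then show ?thesis
    unfolding \<kappa>_def \<theta>_def .
qed

lemma Min_pairwise_dist:
  fixes y :: "nat \<Rightarrow> real"
  assumes inj: "inj_on y {..<n}" and "2 \<le> n"
  shows "0 < Min {\<bar>y p - y j\<bar> | p j. p < n \<and> j < n \<and> p \<noteq> j}"
    and "\<forall>p<n. \<forall>q<n. p \<noteq> q \<longrightarrow> Min {\<bar>y p - y j\<bar> | p j. p < n \<and> j < n \<and> p \<noteq> j} \<le> \<bar>y p - y q\<bar>"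
proof -
  let ?D = "{\<bar>y p - y j\<bar> | p j. p < n \<and> j < n \<and> p \<noteq> j}"
  have "?D \<subseteq> (\<lambda>(p, j). \<bar>y p - y j\<bar>) ` ({..<n} \<times> {..<n})"
    by auto
  then have fin: "finite ?D"
    by (rule finite_subset) simp
  have "\<bar>y 0 - y 1\<bar> \<in> ?D"
    using \<open>2 \<le> n\<close> by force
  then have "Min ?D \<in> ?D"
    using fin by (intro Min_in) auto
  then show "0 < Min ?D"
    using inj by (auto simp: inj_on_def)
  show "\<forall>p<n. \<forall>q<n. p \<noteq> q \<longrightarrow> Min ?D \<le> \<bar>y p - y q\<bar>"
    using fin by (auto intro: Min_le)
qed

theorem lemma5p1:
  fixes n s :: nat and \<Omega> :: real and y :: "nat \<Rightarrow> real" and a :: "nat \<Rightarrow> complex"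
  assumes "n \<ge> 2" and "s \<ge> n" and "\<Omega> > 0"
    and "\<forall>j<n. \<bar>y j\<bar> \<le> real (n - 1) * pi / (2 * \<Omega>)"
    and "inj_on y {..<n}"
    and "\<forall>j<n. a j \<noteq> 0"
  shows "sigma n (Dmat s n \<Omega> y * Amat n \<Omega> y a * transpose_mat (Dmat s n \<Omega> y))
     \<ge> Min ((\<lambda>j. cmod (a j)) ` {..<n}) * (zeta n)^2
        * ((\<Omega> / real s) * Min {\<bar>y p - y j\<bar> | p j. p < n \<and> j < n \<and> p \<noteq> j}) ^ (2 * n - 2)
        / (real n * pi ^ (2 * n - 2))"
proof -
  define \<delta> where "\<delta> = Min {\<bar>y p - y j\<bar> | p j. p < n \<and> j < n \<and> p \<noteq> j}"
  define m where "m = Min ((\<lambda>j. cmod (a j)) ` {..<n})"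
  define \<sigma> where "\<sigma> = (zeta n * (\<Omega> / real s * \<delta>) ^ (n - 1) / pi ^ (n - 1))^2 / n"
  have \<delta>: "0 < \<delta>" "\<forall>p<n. \<forall>q<n. p \<noteq> q \<longrightarrow> \<delta> \<le> \<bar>y p - y q\<bar>"
    unfolding \<delta>_def using Min_pairwise_dist assms(1,5) by blast+
  have "0 \<le> m"
    unfolding m_def using assms(1) by (subst Min_ge_iff) (auto simp: lessThan_empty_iff)
  moreover have "\<forall>p<n. m \<le> cmod (exp (- \<i> * of_real (y p * \<Omega>)) * a p)"
    by (simp add: m_def norm_mult norm_exp_eq_Re)
  moreover have "0 < \<sigma>"
    using \<delta> assms zeta_pos[of n] by (simp add: \<sigma>_def)
  moreover have "\<sigma> * (\<Sum>j<n. cmod (x j)^2)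
      \<le> (\<Sum>k<s + 1. cmod (\<Sum>j<n. exp (\<i> * of_real (y j * \<Omega> / real s)) ^ k * x j)^2)" for x
    unfolding \<sigma>_def using assms \<delta> by (intro Dmat_lower_bound) auto
  ultimately have "m * \<sigma> \<le> sigma n (Dmat s n \<Omega> y * Amat n \<Omega> y a * transpose_mat (Dmat s n \<Omega> y))"
    using assms(1,2)
    by (intro sigma_ge_of_factorization[OF carrier_Dmat_Amat_transpose index_Dmat_Amat_transpose]) auto
  moreover have "2 * n - 2 = 2 * (n - 1)"
    by simp
  ultimately show ?thesis
    unfolding \<delta>_def[symmetric] m_def[symmetric] \<sigma>_def
    by (simp only: power_even_eq) (simp add: power_divide power_mult_distrib field_simps)
qed

end
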